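(* For every integer $n\geq 0$, \[ \overline{p}(n)\equiv (-1)^{n}\,\overline{p}(4n)\pmod{8}. \]
   Context: An overpartition of a nonnegative integer $n$ is a partition of $n$ in which the first occurrence of each distinct part may be overlined. $\overline{p}(n)$ denotes the number of overpartitions of $n$, with $\overline{p}(0)=1$; equivalently $\sum_{n\ge0}\overline{p}(n)q^n=\prod_{k\ge1}\frac{1+q^k}{1-q^k}$. *)

theory Defs
  imports Main "HOL-Library.Multiset" "HOL-Number_Theory.Cong"
begin

text \<open>An overpartition of n is a partition of n (a multiset of positive parts
summing to n) together with a choice of a set of distinct parts whose first
occurrence is overlined.\<close>

definition overpartitions :: "nat \<Rightarrow> (nat multiset \<times> nat set) set" where
  "overpartitions n = {(M, S). (\<forall>x \<in># M. x > 0) \<and> sum_mset M = n \<and> S \<subseteq> set_mset M}"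

definition overpartition_count :: "nat \<Rightarrow> nat" where
  "overpartition_count n = card (overpartitions n)"

end

theory Submission
  imports Defs "HOL-Library.Z2" "HOL-Library.Disjoint_Sets"
begin

(*
  An overpartition is a partition M with a set of overlined distinct parts, so
  p(n) = sum over partitions M of n of 2^k(M), where k(M) is the number of distinct
  part sizes. Modulo 8 only k(M) = 1 and k(M) = 2 survive (for n > 0):
    p(n) = 2 #{k = 1} + 4 #{k = 2}  (mod 8).
  Partitions with one part size are the factorisations n = a * x (a copies of x);
  those with two part sizes are quadruples (y, a, x, b), x < y, a*y + b*x = n.
  Ferrers conjugation is an involution on the latter, whose fixed points are the
  factorisations n = a * b with a < b, a + b even. Counting fixed points of
  involutions modulo 2 (the swap (a, b) -> (b, a) on factorisations as well) yields
    p(n) = 2 s(n) + 4 e(n)  (mod 8),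
  where s(n) counts factorisations a * a and e(n) those a * b with a odd, b even.
  Finally s(4n) = s(n), e(4n) = #{odd divisors of n}, which equals e(n) for n
  even and is congruent to s(n) mod 2 for n odd; this gives the theorem.
*)

section \<open>Parity of the number of fixed points of an involution\<close>

lemma of_nat_bit: "(of_nat m :: bit) = (if even m then 0 else 1)"
  by (induction m) auto

lemma even_card_fixpoint_free_involution:
  assumes "\<And>x. x \<in> S \<Longrightarrow> h x \<in> S" "\<And>x. x \<in> S \<Longrightarrow> h (h x) = x"
    and "\<And>x. x \<in> S \<Longrightarrow> h x \<noteq> x"
  shows "even (card S)"
proof -
  have "(\<Sum>x\<in>S. (1::bit)) = 0"
    by (rule sum_involution_eq_0[where h = h]) (use assms in auto)
  then show ?thesis
    by (simp add: of_nat_bit split: if_splits)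
qed

lemma card_involution_fixpoints_cong:
  assumes "finite S" "\<And>x. x \<in> S \<Longrightarrow> h x \<in> S" "\<And>x. x \<in> S \<Longrightarrow> h (h x) = x"
  shows "[card S = card {x \<in> S. h x = x}] (mod 2)"
proof -
  let ?F = "{x \<in> S. h x = x}"
  have "even (card (S - ?F))"
    by (rule even_card_fixpoint_free_involution[where h = h]) (use assms in auto)
  moreover have "card S = card ?F + card (S - ?F)"
    using card_Int_Diff[OF assms(1), of ?F] by (simp add: Int_absorb1)
  ultimately show ?thesis
    by (auto simp: cong_def)
qed

section \<open>Overpartitions as weighted partitions\<close>

definition partitions :: "nat \<Rightarrow> nat multiset set" where
  "partitions n = {M. (\<forall>x\<in>#M. x > 0) \<and> sum_mset M = n}"

lemma partition_bounds:
  assumes "M \<in> partitions n"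
  shows "set_mset M \<subseteq> {1..n}" "size M \<le> n"
proof -
  have pos: "\<forall>x\<in>#M. x > 0" and sum: "sum_mset M = n"
    using assms by (auto simp: partitions_def)
  show "set_mset M \<subseteq> {1..n}"
  proof
    fix x assume "x \<in># M"
    then obtain N where "M = add_mset x N" by (blast dest: multi_member_split)
    then show "x \<in> {1..n}" using pos sum by auto
  qed
  have "size M \<le> sum_mset M"
    using pos by (induction M) auto
  then show "size M \<le> n" using sum by simp
qed

lemma finite_partitions: "finite (partitions n)"
proof (rule finite_subset)
  show "partitions n \<subseteq> (\<Union>k\<le>n. multisets_of_size {1..n} k)"
    using partition_bounds by (fastforce simp: multisets_of_size_def)
qed auto

lemma overpartition_count_eq_sum:
  "overpartition_count n = (\<Sum>M\<in>partitions n. 2 ^ card (set_mset M))"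
proof -
  have "overpartitions n = Sigma (partitions n) (\<lambda>M. Pow (set_mset M))"
    by (auto simp: overpartitions_def partitions_def)
  then show ?thesis
    unfolding overpartition_count_def using finite_partitions by (simp add: card_Pow)
qed

lemma power_two_mod_8:
  "[(2::int) ^ k = of_bool (k = 0) + 2 * of_bool (k = 1) + 4 * of_bool (k = 2)] (mod 8)"
proof (cases "k \<ge> 3")
  case True
  then obtain j where "k = j + 3" by (metis add.commute le_Suc_ex)
  then show ?thesis by (simp add: power_add cong_def)
next
  case False
  then have "k = 0 \<or> k = 1 \<or> k = 2" by auto
  then show ?thesis by (auto simp: cong_def)
qed

definition partitions_with_sizes :: "nat \<Rightarrow> nat \<Rightarrow> nat multiset set" where
  "partitions_with_sizes n k = {M \<in> partitions n. card (set_mset M) = k}"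

text \<open>Hence, for n > 0 (so that the empty partition does not occur), modulo 8 only
  partitions with one or two part sizes contribute.\<close>

lemma overpartition_count_mod_8:
  assumes "n > 0"
  shows "[int (overpartition_count n) =
           2 * int (card (partitions_with_sizes n 1)) + 4 * int (card (partitions_with_sizes n 2))] (mod 8)"
proof -
  have no_empty: "partitions_with_sizes n 0 = {}"
    using assms by (auto simp: partitions_with_sizes_def partitions_def)
  have count: "(\<Sum>M\<in>partitions n. of_bool (card (set_mset M) = k)) = int (card (partitions_with_sizes n k))"
    for k using finite_partitions by (simp add: partitions_with_sizes_def Int_def)
  have "int (overpartition_count n) = (\<Sum>M\<in>partitions n. (2::int) ^ card (set_mset M))"
    by (simp add: overpartition_count_eq_sum)
  also have "[\<dots> = (\<Sum>M\<in>partitions n. of_bool (card (set_mset M) = 0)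
      + 2 * of_bool (card (set_mset M) = 1) + 4 * of_bool (card (set_mset M) = 2))] (mod 8)"
    by (rule cong_sum) (rule power_two_mod_8)
  also have "(\<Sum>M\<in>partitions n. of_bool (card (set_mset M) = 0)
      + 2 * of_bool (card (set_mset M) = 1) + 4 * of_bool (card (set_mset M) = 2) :: int)
    = 2 * int (card (partitions_with_sizes n 1)) + 4 * int (card (partitions_with_sizes n 2))"
    by (simp only: sum.distrib sum_distrib_left[symmetric] count no_empty) simp
  finally show ?thesis .
qed

section \<open>Counting factorisations\<close>

definition pair_count :: "nat \<Rightarrow> (nat \<Rightarrow> nat \<Rightarrow> bool) \<Rightarrow> nat" where
  "pair_count n P = card {(a, b). a * b = n \<and> P a b}"

lemma finite_factorisations:
  assumes "(n::nat) > 0"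
  shows "finite {(a, b). a * b = n \<and> P a b}"
proof (rule finite_subset)
  have "a \<le> n \<and> b \<le> n" if "a * b = n" for a b
    using that assms by (auto intro: dvd_imp_le)
  then show "{(a, b). a * b = n \<and> P a b} \<subseteq> {..n} \<times> {..n}"
    by auto
qed auto

lemma pair_count_cong:
  assumes "\<And>a b. a * b = n \<Longrightarrow> P a b = Q a b"
  shows "pair_count n P = pair_count n Q"
  unfolding pair_count_def by (rule arg_cong[where f = card]) (use assms in auto)

lemma pair_count_split:
  assumes "n > 0"
  shows "pair_count n P = pair_count n (\<lambda>a b. P a b \<and> Q a b) + pair_count n (\<lambda>a b. P a b \<and> \<not> Q a b)"
proof -
  have "{(a, b). a * b = n \<and> P a b} =
      {(a, b). a * b = n \<and> P a b \<and> Q a b} \<union> {(a, b). a * b = n \<and> P a b \<and> \<not> Q a b}"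
    by auto
  then show ?thesis
    unfolding pair_count_def
    by (simp add: card_Un_disjoint[OF finite_factorisations finite_factorisations, OF assms assms]
        disjoint_iff)
qed

lemma pair_count_swap: "pair_count n P = pair_count n (\<lambda>a b. P b a)"
proof -
  have "{(a, b). a * b = n \<and> P b a} = prod.swap ` {(a, b). a * b = n \<and> P a b}"
    by (auto simp: image_def mult.commute)
  then show ?thesis
    unfolding pair_count_def by (simp add: card_image)
qed

text \<open>The exchange is an involution whose fixed points are the squares, so the
  number of divisors and the number of square factorisations agree mod 2.\<close>

lemma pair_count_parity:
  assumes "n > 0"
  shows "[pair_count n (\<lambda>_ _. True) = pair_count n (=)] (mod 2)"
proof -
  let ?D = "{(a, b). a * b = n}"
  have fin: "finite ?D"
    using finite_factorisations[OF assms, of "\<lambda>_ _. True"] by simp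
  have swap_D: "prod.swap p \<in> ?D" if "p \<in> ?D" for p
    using that by (cases p) (simp add: mult.commute)
  have "[card ?D = card {p \<in> ?D. prod.swap p = p}] (mod 2)"
    by (rule card_involution_fixpoints_cong[OF fin swap_D]) simp_all
  moreover have "{p \<in> ?D. prod.swap p = p} = {(a, b). a * b = n \<and> a = b}"
    by (force simp: prod.swap_def)
  ultimately show ?thesis
    by (simp add: pair_count_def)
qed

section \<open>Partitions with one or two distinct part sizes\<close>

text \<open>A partition with a single part size is a copies of x with a * x = n.\<close>

lemma card_partitions_one_size:
  assumes "n > 0"
  shows "card (partitions_with_sizes n 1) = pair_count n (\<lambda>_ _. True)"
proof -
  let ?D = "{(a, x). a * x = n}"
  let ?f = "\<lambda>(a, x). replicate_mset a x"
  let ?g = "\<lambda>M. (size M, the_elem (set_mset M))"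
  have "bij_betw ?f ?D (partitions_with_sizes n 1)"
  proof (rule bij_betw_byWitness[where f' = ?g])
    show "\<forall>p\<in>?D. ?g (?f p) = p"
      using assms by (auto intro: gr0I)
    show "?f ` ?D \<subseteq> partitions_with_sizes n 1"
      using assms by (auto intro: gr0I simp: partitions_with_sizes_def partitions_def)
    show "\<forall>M\<in>partitions_with_sizes n 1. ?f (?g M) = M"
      by (auto simp: partitions_with_sizes_def card_1_singleton_iff
          intro: set_mset_subset_singletonD[symmetric])
    show "?g ` partitions_with_sizes n 1 \<subseteq> ?D"
    proof clarify
      fix M assume "M \<in> partitions_with_sizes n 1"
      then obtain x where x: "set_mset M = {x}" and sum: "sum_mset M = n"
        by (auto simp: partitions_with_sizes_def partitions_def card_1_singleton_iff)
      have "M = replicate_mset (size M) x"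
        using x by (simp add: set_mset_subset_singletonD)
      then have "sum_mset M = size M * x"
        by (metis sum_mset_replicate_mset of_nat_id)
      then show "size M * the_elem (set_mset M) = n"
        using x sum by simp
    qed
  qed
  then show ?thesis
    by (simp add: pair_count_def bij_betw_same_card)
qed

lemma card_2_ordered:
  fixes A :: "'a::linorder set"
  assumes "card A = 2"
  obtains x y where "A = {x, y}" "x < y"
proof -
  obtain u v where uv: "A = {u, v}" "u \<noteq> v"
    using assms by (auto simp: card_2_iff)
  show thesis
  proof (cases "u < v")
    case True
    then show thesis using that uv by blast
  next
    case False
    then have "v < u" using uv(2) by simp
    then show thesis using that[of v u] uv by (simp add: insert_commute)
  qed
qed

lemma mset_two_values:
  assumes "set_mset M = {x, y}" "x \<noteq> y"
  shows "M = replicate_mset (count M y) y + replicate_mset (count M x) x"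
proof (rule multiset_eqI)
  fix z
  show "count M z = count (replicate_mset (count M y) y + replicate_mset (count M x) x) z"
    using assms by (cases "z \<in> {x, y}") (auto simp: count_eq_zero_iff)
qed

text \<open>A partition with two part sizes: a copies of y and b copies of a smaller x.\<close>

definition two_size_data :: "nat \<Rightarrow> (nat \<times> nat \<times> nat \<times> nat) set" where
  "two_size_data n = {(y, a, x, b). a * y + b * x = n \<and> 0 < x \<and> x < y \<and> 0 < a \<and> 0 < b}"

lemma finite_two_size_data: "finite (two_size_data n)"
proof (rule finite_subset)
  have "y \<le> n \<and> a \<le> n \<and> x \<le> n \<and> b \<le> n"
    if "a * y + b * x = n" "0 < x" "0 < a" "0 < b" "x < y" for y a x b :: nat
  proof -
    have "y \<le> a * y" "a \<le> a * y" "x \<le> b * x" "b \<le> b * x"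
      using that by simp_all
    then show ?thesis using that(1) by linarith
  qed
  then show "two_size_data n \<subseteq> {..n} \<times> {..n} \<times> {..n} \<times> {..n}"
    by (auto simp: two_size_data_def)
qed auto

lemma card_partitions_two_sizes:
  "card (partitions_with_sizes n 2) = card (two_size_data n)"
proof -
  let ?f = "\<lambda>(y, a, x, b). replicate_mset a y + replicate_mset b x"
  let ?g = "\<lambda>M. (Max (set_mset M), count M (Max (set_mset M)),
                  Min (set_mset M), count M (Min (set_mset M)))"
  have "bij_betw ?f (two_size_data n) (partitions_with_sizes n 2)"
  proof (rule bij_betw_byWitness[where f' = ?g])
    show "\<forall>p\<in>two_size_data n. ?g (?f p) = p"
      by (auto simp: two_size_data_def max_def min_def)
    show "?f ` two_size_data n \<subseteq> partitions_with_sizes n 2"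
      by (auto simp: two_size_data_def partitions_with_sizes_def partitions_def)
    show "\<forall>M\<in>partitions_with_sizes n 2. ?f (?g M) = M"
    proof
      fix M assume "M \<in> partitions_with_sizes n 2"
      then obtain x y where xy: "set_mset M = {x, y}" "x < y"
        by (auto simp: partitions_with_sizes_def elim: card_2_ordered)
      then show "?f (?g M) = M"
        using mset_two_values[of M x y] by (simp add: max_def min_def)
    qed
    show "?g ` partitions_with_sizes n 2 \<subseteq> two_size_data n"
    proof clarify
      fix M assume M: "M \<in> partitions_with_sizes n 2"
      then obtain x y where xy: "set_mset M = {x, y}" "x < y"
        by (auto simp: partitions_with_sizes_def elim: card_2_ordered)
      have "sum_mset M = count M y * y + count M x * x"
        using arg_cong[OF mset_two_values[OF xy(1)], of sum_mset] xy(2) by simp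
      then show "?g M \<in> two_size_data n"
        using M xy by (auto simp: two_size_data_def partitions_with_sizes_def partitions_def
            max_def min_def mult.commute)
    qed
  qed
  then show ?thesis
    by (simp add: bij_betw_same_card)
qed

section \<open>Conjugation of partitions with two part sizes\<close>

text \<open>The Ferrers diagram of a copies of y and b copies of x (x < y) has as its
  transpose x copies of a + b and y - x copies of a.\<close>

definition conjugate :: "nat \<times> nat \<times> nat \<times> nat \<Rightarrow> nat \<times> nat \<times> nat \<times> nat" where
  "conjugate = (\<lambda>(y, a, x, b). (a + b, x, a, y - x))"

lemma conjugate_mem:
  assumes "t \<in> two_size_data n"
  shows "conjugate t \<in> two_size_data n"
proof -
  obtain y a x b where t: "t = (y, a, x, b)" and n: "a * y + b * x = n"
    and ord: "0 < x" "x < y" "0 < a" "0 < b"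
    using assms by (auto simp: two_size_data_def)
  obtain d where "y = x + d"
    using ord(2) less_imp_add_positive by blast
  then have "x * (a + b) + (y - x) * a = a * y + b * x"
    by (simp add: algebra_simps)
  then show ?thesis
    using t n ord by (simp add: two_size_data_def conjugate_def mult.commute)
qed

lemma conjugate_conjugate:
  assumes "t \<in> two_size_data n"
  shows "conjugate (conjugate t) = t"
  using assms by (auto simp: two_size_data_def conjugate_def)

lemma self_conjugate_iff:
  "t \<in> two_size_data n \<and> conjugate t = t \<longleftrightarrow>
     (\<exists>a b. t = (a + b, a, a, b) \<and> a * (a + 2 * b) = n \<and> 0 < a \<and> 0 < b)"
  by (cases t) (auto simp: two_size_data_def conjugate_def algebra_simps)

lemma even_sum_gap:
  fixes a c :: nat
  assumes "a < c" "even (a + c)"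
  obtains k where "c = a + 2 * k" "0 < k"
proof -
  have "even (c - a)"
    using assms by (simp add: even_diff_nat add.commute)
  then obtain k where "c - a = 2 * k" by (rule evenE)
  then have "c = a + 2 * k" "0 < k"
    using assms by arith+
  then show thesis by (rule that)
qed

lemma card_self_conjugate:
  assumes "n > 0"
  shows "card {t \<in> two_size_data n. conjugate t = t} = pair_count n (\<lambda>a c. a < c \<and> even (a + c))"
proof -
  let ?F = "{t \<in> two_size_data n. conjugate t = t}"
  let ?E = "{(a, c). a * c = n \<and> a < c \<and> even (a + c)}"
  let ?f = "\<lambda>(y, a, x, b). (a, a + 2 * b)"
  let ?g = "\<lambda>(a, c). ((a + c) div 2, a, a, (c - a) div 2)"
  have F_shape: "\<exists>a b. t = (a + b, a, a, b) \<and> a * (a + 2 * b) = n \<and> 0 < b" if "t \<in> ?F" for t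
    using that unfolding mem_Collect_eq self_conjugate_iff by blast
  have "bij_betw ?f ?F ?E"
  proof (rule bij_betw_byWitness[where f' = ?g])
    show "\<forall>t\<in>?F. ?g (?f t) = t"
    proof
      fix t assume "t \<in> ?F"
      then obtain a b where "t = (a + b, a, a, b)"
        using F_shape by blast
      then show "?g (?f t) = t" by simp
    qed
    show "?f ` ?F \<subseteq> ?E"
    proof
      fix p assume "p \<in> ?f ` ?F"
      then obtain t where t: "t \<in> ?F" "p = ?f t" by blast
      obtain a b where "t = (a + b, a, a, b)" "a * (a + 2 * b) = n" "0 < b"
        using F_shape[OF t(1)] by blast
      then show "p \<in> ?E" using t(2) by simp
    qed
    show "\<forall>p\<in>?E. ?f (?g p) = p"
      by (auto elim: even_sum_gap)
    show "?g ` ?E \<subseteq> ?F"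
    proof
      fix q assume "q \<in> ?g ` ?E"
      then obtain a c where ac: "q = ?g (a, c)" "a * c = n" "a < c" "even (a + c)"
        by blast
      then obtain k where k: "c = a + 2 * k" "0 < k"
        using even_sum_gap by blast
      have "0 < a" using ac(2) assms by (auto intro: gr0I)
      then have "\<exists>a' b. q = (a' + b, a', a', b) \<and> a' * (a' + 2 * b) = n \<and> 0 < a' \<and> 0 < b"
        using ac k by (intro exI[of _ a] exI[of _ k]) simp
      then show "q \<in> ?F"
        unfolding mem_Collect_eq self_conjugate_iff .
    qed
  qed
  then show ?thesis
    by (simp add: pair_count_def bij_betw_same_card)
qed

section \<open>The overpartition count modulo 8 in terms of factorisations\<close>

text \<open>Non-square factorisations come in swapped pairs, one with a < b.\<close>

lemma pair_count_all:
  assumes "n > 0"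
  shows "pair_count n (\<lambda>_ _. True) = pair_count n (=) + 2 * pair_count n (\<lambda>a b. a < b)"
proof -
  have "pair_count n (\<lambda>_ _. True) = pair_count n (=) + pair_count n (\<lambda>a b. a \<noteq> b)"
    using pair_count_split[OF assms, of "\<lambda>_ _. True" "(=)"] by simp
  also have "pair_count n (\<lambda>a b. a \<noteq> b) =
      pair_count n (\<lambda>a b. a \<noteq> b \<and> a < b) + pair_count n (\<lambda>a b. a \<noteq> b \<and> \<not> a < b)"
    by (rule pair_count_split[OF assms])
  also have "pair_count n (\<lambda>a b. a \<noteq> b \<and> a < b) = pair_count n (\<lambda>a b. a < b)"
    by (rule pair_count_cong) auto
  also have "pair_count n (\<lambda>a b. a \<noteq> b \<and> \<not> a < b) = pair_count n (\<lambda>a b. b < a)"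
    by (rule pair_count_cong) auto
  also have "pair_count n (\<lambda>a b. b < a) = pair_count n (\<lambda>a b. a < b)"
    by (rule pair_count_swap)
  finally show ?thesis by simp
qed

text \<open>Factorisations with a + b odd: counting them by the smaller factor or by the
  odd factor gives half of them either way.\<close>

lemma pair_count_odd_sum:
  assumes "n > 0"
  shows "pair_count n (\<lambda>a b. a < b \<and> odd (a + b)) = pair_count n (\<lambda>a b. odd a \<and> even b)"
proof -
  let ?O = "\<lambda>a b. odd ((a::nat) + b)"
  have "pair_count n ?O = pair_count n (\<lambda>a b. ?O a b \<and> a < b) + pair_count n (\<lambda>a b. ?O a b \<and> \<not> a < b)"
    by (rule pair_count_split[OF assms])
  also have "pair_count n (\<lambda>a b. ?O a b \<and> \<not> a < b) = pair_count n (\<lambda>a b. b < a \<and> ?O b a)"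
    by (rule pair_count_cong) (auto simp: add.commute not_less le_less)
  also have "\<dots> = pair_count n (\<lambda>a b. a < b \<and> ?O a b)"
    by (rule pair_count_swap[symmetric])
  finally have lower: "pair_count n ?O = 2 * pair_count n (\<lambda>a b. a < b \<and> ?O a b)"
    by (simp add: conj_commute)
  have "pair_count n ?O = pair_count n (\<lambda>a b. ?O a b \<and> odd a) + pair_count n (\<lambda>a b. ?O a b \<and> \<not> odd a)"
    by (rule pair_count_split[OF assms])
  also have "pair_count n (\<lambda>a b. ?O a b \<and> \<not> odd a) = pair_count n (\<lambda>a b. odd b \<and> even a)"
    by (rule pair_count_cong) auto
  also have "\<dots> = pair_count n (\<lambda>a b. odd a \<and> even b)"
    by (rule pair_count_swap[symmetric])
  also have "pair_count n (\<lambda>a b. ?O a b \<and> odd a) = pair_count n (\<lambda>a b. odd a \<and> even b)"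
    by (rule pair_count_cong) auto
  finally show ?thesis
    using lower by simp
qed

text \<open>Combining the two involutions (swap and conjugation) modulo 4.\<close>

lemma divisors_and_two_sizes_mod_4:
  assumes "n > 0"
  shows "[int (pair_count n (\<lambda>_ _. True)) + 2 * int (card (two_size_data n)) =
          int (pair_count n (=)) + 2 * int (pair_count n (\<lambda>a b. odd a \<and> even b))] (mod 4)"
proof -
  let ?Le = "pair_count n (\<lambda>a b. a < b \<and> even (a + b))"
  have "[card (two_size_data n) = card {t \<in> two_size_data n. conjugate t = t}] (mod 2)"
    by (rule card_involution_fixpoints_cong) (auto simp: finite_two_size_data conjugate_mem conjugate_conjugate)
  then have "[int (card (two_size_data n)) = int ?Le] (mod 2)"
    using cong_int_iff[of "card (two_size_data n)" ?Le 2] by (simp add: card_self_conjugate[OF assms])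
  then obtain k where k: "int ?Le = int (card (two_size_data n)) + 2 * k"
    unfolding cong_iff_lin by blast
  have lower: "pair_count n (\<lambda>a b. a < b) = ?Le + pair_count n (\<lambda>a b. odd a \<and> even b)"
    using pair_count_split[OF assms, of "\<lambda>a b. a < b" "\<lambda>a b. even (a + b)"]
      pair_count_odd_sum[OF assms] by simp
  have "pair_count n (\<lambda>_ _. True) =
      pair_count n (=) + 2 * pair_count n (\<lambda>a b. odd a \<and> even b) + 2 * ?Le"
    using pair_count_all[OF assms] unfolding lower by simp
  then show ?thesis
    unfolding cong_iff_lin using k by (intro exI[of _ "k - int ?Le"]) simp
qed

lemma overpartition_count_mod_8_factorisations:
  assumes "n > 0"
  shows "[int (overpartition_count n) =
          2 * int (pair_count n (=)) + 4 * int (pair_count n (\<lambda>a b. odd a \<and> even b))] (mod 8)"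
proof -
  have "[int (overpartition_count n) =
      2 * (int (pair_count n (\<lambda>_ _. True)) + 2 * int (card (two_size_data n)))] (mod 8)"
    using overpartition_count_mod_8[OF assms]
    unfolding card_partitions_one_size[OF assms] card_partitions_two_sizes by simp
  moreover have "[2 * (int (pair_count n (\<lambda>_ _. True)) + 2 * int (card (two_size_data n))) =
      2 * (int (pair_count n (=)) + 2 * int (pair_count n (\<lambda>a b. odd a \<and> even b)))] (mod 8)"
    using cong_cmult_leftI[OF divisors_and_two_sizes_mod_4[OF assms], of 2] by simp
  ultimately show ?thesis
    by (simp add: cong_trans)
qed

section \<open>Passing from n to 4n\<close>

text \<open>Square factorisations of 4n are those of n with both factors doubled.\<close>

lemma pair_count_squares_times_4: "pair_count (4 * n) (=) = pair_count n (=)"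
proof -
  have "{(a, b). a * b = 4 * n \<and> a = b} = (\<lambda>(a, b). (2 * a, 2 * b)) ` {(a, b). a * b = n \<and> a = b}"
  proof (rule set_eqI, rule iffI)
    fix p assume "p \<in> {(a, b). a * b = 4 * n \<and> a = b}"
    then obtain a where a: "p = (a, a)" "a * a = 4 * n" by auto
    then have "even (a * a)" by simp
    then have "even a" by simp
    then obtain c where "a = 2 * c" by (rule evenE)
    then show "p \<in> (\<lambda>(a, b). (2 * a, 2 * b)) ` {(a, b). a * b = n \<and> a = b}"
      using a by (auto intro!: image_eqI[of _ _ "(c, c)"])
  qed auto
  moreover have "inj (\<lambda>(a::nat, b::nat). (2 * a, 2 * b))"
    by (auto simp: inj_def)
  ultimately show ?thesis
    unfolding pair_count_def by (simp add: card_image inj_on_subset)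
qed

text \<open>With a odd, a * b = 4n forces b = 4c with a * c = n.\<close>

lemma pair_count_odd_even_times_4:
  "pair_count (4 * n) (\<lambda>a b. odd a \<and> even b) = pair_count n (\<lambda>a b. odd a)"
proof -
  have "{(a, b). a * b = 4 * n \<and> odd a \<and> even b} = (\<lambda>(a, c). (a, 4 * c)) ` {(a, c). a * c = n \<and> odd a}"
  proof (rule set_eqI, rule iffI)
    fix p assume "p \<in> {(a, b). a * b = 4 * n \<and> odd a \<and> even b}"
    then obtain a b where ab: "p = (a, b)" "a * b = 4 * n" "odd a" by auto
    have "even (a * b)" using ab(2) by simp
    then have "even b" using ab(3) by simp
    then obtain b' where b': "b = 2 * b'" by (rule evenE)
    then have "even (a * b')" using ab(2) by simp
    then have "even b'" using ab(3) by simp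
    then obtain c where "b' = 2 * c" by (rule evenE)
    with b' have "b = 4 * c" by simp
    then show "p \<in> (\<lambda>(a, c). (a, 4 * c)) ` {(a, c). a * c = n \<and> odd a}"
      using ab by (auto intro!: image_eqI[of _ _ "(a, c)"])
  qed auto
  moreover have "inj (\<lambda>(a::nat, c::nat). (a, 4 * c))"
    by (auto simp: inj_def)
  ultimately show ?thesis
    unfolding pair_count_def by (simp add: card_image inj_on_subset)
qed

lemma overpartition_count_times_4_mod_8:
  assumes "n > 0"
  shows "[int (overpartition_count (4 * n)) =
          2 * int (pair_count n (=)) + 4 * int (pair_count n (\<lambda>a b. odd a))] (mod 8)"
  using overpartition_count_mod_8_factorisations[of "4 * n"] assms
  unfolding pair_count_squares_times_4 pair_count_odd_even_times_4 by simp

text \<open>For even n an odd divisor a of n = a * b has an even cofactor b, so p(4n) = p(n).\<close>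

lemma overpartition_count_times_4_even:
  assumes "even n" "n > 0"
  shows "[int (overpartition_count (4 * n)) = int (overpartition_count n)] (mod 8)"
proof -
  have "pair_count n (\<lambda>a b. odd a) = pair_count n (\<lambda>a b. odd a \<and> even b)"
    by (rule pair_count_cong) (use assms(1) in auto)
  then show ?thesis
    using overpartition_count_times_4_mod_8[OF assms(2)]
      overpartition_count_mod_8_factorisations[OF assms(2)]
    by (metis cong_sym cong_trans)
qed

text \<open>For odd n there are no odd-times-even factorisations, while every divisor is
  odd and the number of divisors is congruent to s(n) mod 2, so p(4n) = 6 s(n) = -p(n).\<close>

lemma overpartition_count_times_4_odd:
  assumes "odd n"
  shows "[int (overpartition_count (4 * n)) = - int (overpartition_count n)] (mod 8)"
proof -
  have n: "n > 0" using assms by (auto intro: gr0I)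
  let ?s = "int (pair_count n (=))"
  have "pair_count n (\<lambda>a b. odd a \<and> even b) = pair_count n (\<lambda>_ _. False)"
    by (rule pair_count_cong) (use assms in auto)
  then have "pair_count n (\<lambda>a b. odd a \<and> even b) = 0"
    by (simp add: pair_count_def)
  then obtain k where k: "2 * ?s = int (overpartition_count n) + 8 * k"
    using overpartition_count_mod_8_factorisations[OF n] unfolding cong_iff_lin by auto
  have "pair_count n (\<lambda>a b. odd a) = pair_count n (\<lambda>_ _. True)"
    by (rule pair_count_cong) (use assms in auto)
  then obtain l where l: "2 * ?s + 4 * int (pair_count n (\<lambda>_ _. True)) =
      int (overpartition_count (4 * n)) + 8 * l"
    using overpartition_count_times_4_mod_8[OF n] unfolding cong_iff_lin by auto
  obtain j where j: "?s = int (pair_count n (\<lambda>_ _. True)) + 2 * j"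
    using pair_count_parity[OF n] unfolding cong_int_iff[symmetric] cong_iff_lin by auto
  show ?thesis
    unfolding cong_iff_lin using k l j by (intro exI[of _ "k + l + j - ?s"]) simp
qed

theorem theorem1p2:
  fixes n :: nat
  shows "[int (overpartition_count n) = (-1) ^ n * int (overpartition_count (4 * n))] (mod 8)"
proof (cases "even n")
  case True
  show ?thesis
  proof (cases "n = 0")
    case False
    then show ?thesis
      using True overpartition_count_times_4_even[of n] by (simp add: cong_sym)
  qed simp
next
  case False
  then have "[int (overpartition_count n) = - int (overpartition_count (4 * n))] (mod 8)"
    using cong_uminus[OF overpartition_count_times_4_odd[OF False]] by (simp add: cong_sym)
  then show ?thesis
    using False by simp
qed

end
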